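(* Let $G$ be a finite abelian group, $R=\mathbb Z[G]$, $n$ a positive integer, and $H$ a normal subgroup of $S_n$. Let $T=(G^n\rtimes S_n)/(G^n\rtimes H)$ (a set of $[S_n:H]$ cosets), and write $\bar a$ for the coset of $a\in G^n\rtimes S_n$. Then there is a $\hat G$-linear representation $\varphi_H:R[\mathbb M_T]\to R[\mathbb M_n]$ of $\mathbb M_n$ of dimension $[S_n:H]$ satisfying $$\varphi_H(x_{\bar a\bar b})=\sum_{\sigma\in P(\overline{ab^{-1}})}x_\sigma$$ for all $\bar a,\bar b\in T$, where $P(\overline{ab^{-1}})=\{\sigma\in S_n: G^n\times\{\sigma\}\subseteq\overline{ab^{-1}}\}$ and $x_\sigma=\prod_{k=1}^n x_{\sigma(k)k}$.
   Context: $\hat G=G\sqcup\{0\}\subseteq R=\mathbb Z[G]$. For a finite index set $T$, $R[\mathbb M_T]=R[x_{ij}\mid i,j\in T]/(x_{ik}x_{jk},\ x_{ki}x_{kj}\mid k\in T, i\neq j)$, an $R$-bialgebra with comultiplication $\Delta(x_{ij})=\sum_k x_{ik}\otimes x_{kj}$ and counit $\varepsilon(x_{ij})=\delta_{ij}$; $\mathbb M_n=\mathbb M_{[n]}$ with $[n]=\{1,\dots,n\}$, and $\mathbb M_T\cong\mathbb M_{|T|}$. A $\hat G$-linear representation of $\mathbb M_n$ of dimension $d$ is an $R$-bialgebra homomorphism $\rho:R[\mathbb M_d]\to R[\mathbb M_n]$ such that for every $R$-algebra homomorphism $m:R[\mathbb M_n]\to R$ with $m(x_{ij})\in\hat G$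 for all $i,j$, one has $(m\circ\rho)(x_{kl})\in\hat G$ for all $k,l$. $G^n\rtimes S_n$ is the semidirect product with $S_n$ permuting the coordinates of $G^n$; $G^n\rtimes H$ is a normal subgroup. *)

theory Defs
  imports "HOL-Library.Poly_Mapping" "HOL-Algebra.Sym_Groups" "HOL-Algebra.Coset"
begin

(* Group ring R = Z[G], G written additively: the monoid algebra G \<Rightarrow>\<^sub>0 int (convolution product). *)
type_synonym 'g grpring = "'g \<Rightarrow>\<^sub>0 int"

(* Polynomial ring R[x_v | v] : monomials ('v \<Rightarrow>\<^sub>0 nat) with coefficients in R *)
type_synonym ('v,'g) mpol = "('v \<Rightarrow>\<^sub>0 nat) \<Rightarrow>\<^sub>0 'g grpring"

definition gelt :: "'g::comm_monoid_add \<Rightarrow> 'g grpring" where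
  "gelt g = Poly_Mapping.single g 1"

definition Ghat :: "'g::comm_monoid_add grpring set" where
  "Ghat = insert 0 (range gelt)"

definition PVar :: "'v \<Rightarrow> ('v,'g::comm_monoid_add) mpol" where
  "PVar v = Poly_Mapping.single (Poly_Mapping.single v 1) 1"

definition PConst :: "'g::comm_monoid_add grpring \<Rightarrow> ('v,'g) mpol" where
  "PConst r = Poly_Mapping.single 0 r"

definition peval :: "('c::zero \<Rightarrow> 'r::comm_ring_1) \<Rightarrow> ('v \<Rightarrow> 'r) \<Rightarrow> (('v \<Rightarrow>\<^sub>0 nat) \<Rightarrow>\<^sub>0 'c) \<Rightarrow> 'r" where
  "peval emb f p = (\<Sum>mo\<in>Poly_Mapping.keys p. emb (Poly_Mapping.lookup p mo) * (\<Prod>v\<in>Poly_Mapping.keys mo. f v ^ Poly_Mapping.lookup mo v))"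

definition polys :: "'v set \<Rightarrow> ('v,'g::comm_monoid_add) mpol set" where
  "polys V = {p. \<forall>m\<in>Poly_Mapping.keys p. Poly_Mapping.keys m \<subseteq> V}"

definition gen_ideal :: "'v set \<Rightarrow> ('v,'g::comm_monoid_add) mpol set \<Rightarrow> ('v,'g) mpol set" where
  "gen_ideal V S = {p. \<exists>F c. finite F \<and> F \<subseteq> S \<and> (\<forall>q\<in>F. c q \<in> polys V) \<and> p = (\<Sum>q\<in>F. c q * q)}"

(* defining relations x_ik x_jk, x_ki x_kj (i \<noteq> j) of R[M_T], variables renamed by e *)
definition Mrels_emb :: "('i \<times> 'i \<Rightarrow> 'v) \<Rightarrow> 'i set \<Rightarrow> ('v,'g::comm_monoid_add) mpol set" where
  "Mrels_emb e T =
     {PVar (e (i,k)) * PVar (e (j,k)) | i j k. i \<in> T \<and> j \<in> T \<and> k \<in> T \<and> i \<noteq> j} \<union>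
     {PVar (e (k,i)) * PVar (e (k,j)) | i j k. i \<in> T \<and> j \<in> T \<and> k \<in> T \<and> i \<noteq> j}"

abbreviation Mrels :: "'i set \<Rightarrow> ('i \<times> 'i,'g::comm_monoid_add) mpol set" where
  "Mrels T \<equiv> Mrels_emb id T"

(* ideal I_T with R[M_T] = R[x_ij | i,j\<in>T] / I_T *)
abbreviation Mideal :: "'i set \<Rightarrow> ('i \<times> 'i,'g::comm_monoid_add) mpol set" where
  "Mideal T \<equiv> gen_ideal (T \<times> T) (Mrels T)"

(* R[M_T] \<otimes>_R R[M_T] = R[x_ij (Inl), y_ij (Inr)] / (I_x + I_y) *)
definition Mideal2 :: "'i set \<Rightarrow> (('i \<times> 'i) + ('i \<times> 'i),'g::comm_monoid_add) mpol set" where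
  "Mideal2 T = gen_ideal (Inl ` (T \<times> T) \<union> Inr ` (T \<times> T)) (Mrels_emb Inl T \<union> Mrels_emb Inr T)"

definition comult :: "'i set \<Rightarrow> 'i \<times> 'i \<Rightarrow> (('i \<times> 'i) + ('i \<times> 'i),'g::comm_monoid_add) mpol" where
  "comult T v = (\<Sum>k\<in>T. PVar (Inl (fst v, k)) * PVar (Inr (k, snd v)))"

definition counit :: "'i \<times> 'i \<Rightarrow> 'g::comm_monoid_add grpring" where
  "counit v = (if fst v = snd v then 1 else 0)"

definition prename :: "('v \<Rightarrow> 'w) \<Rightarrow> ('v,'g::comm_monoid_add) mpol \<Rightarrow> ('w,'g) mpol" where
  "prename e p = peval PConst (\<lambda>v. PVar (e v)) p"

(* An R-algebra homomorphism R[M_T] \<rightarrow> R[M_S] is given by the images P(i,j) of the generators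
   x_ij (representatives in R[x_ij | i,j \<in> S]); it is an R-bialgebra homomorphism if: *)
definition bialg_hom :: "'a set \<Rightarrow> 'b set \<Rightarrow> ('a \<times> 'a \<Rightarrow> ('b \<times> 'b,'g::comm_monoid_add) mpol) \<Rightarrow> bool" where
  "bialg_hom T S P \<longleftrightarrow>
     (\<forall>v\<in>T \<times> T. P v \<in> polys (S \<times> S)) \<and>
     (\<forall>r\<in>Mrels T. peval PConst P r \<in> Mideal S) \<and>
     (\<forall>p\<in>polys (T \<times> T).
        peval PConst (comult S) (peval PConst P p)
        - peval PConst (\<lambda>w. case w of Inl v \<Rightarrow> prename Inl (P v) | Inr v \<Rightarrow> prename Inr (P v))
              (peval PConst (comult T) p) \<in> Mideal2 S) \<and>
     (\<forall>p\<in>polys (T \<times> T). peval id counit (peval PConst P p) = peval id counit p)"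

(* \<hat>G-linearity: every R-algebra hom m : R[M_S] \<rightarrow> R (given by values c on generators, killing
   the relations) with m(x_ij) \<in> \<hat>G satisfies (m \<circ> \<rho>)(x_kl) \<in> \<hat>G *)
definition Ghat_linear :: "'a set \<Rightarrow> 'b set \<Rightarrow> ('a \<times> 'a \<Rightarrow> ('b \<times> 'b,'g::comm_monoid_add) mpol) \<Rightarrow> bool" where
  "Ghat_linear T S P \<longleftrightarrow>
     (\<forall>c. (\<forall>v\<in>S \<times> S. c v \<in> Ghat) \<and> (\<forall>r\<in>Mrels S. peval id c r = 0)
          \<longrightarrow> (\<forall>v\<in>T \<times> T. peval id c (P v) \<in> Ghat))"

definition Ghat_rep :: "'a set \<Rightarrow> 'b set \<Rightarrow> ('a \<times> 'a \<Rightarrow> ('b \<times> 'b,'g::comm_monoid_add) mpol) \<Rightarrow> bool" where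
  "Ghat_rep T S P \<longleftrightarrow> bialg_hom T S P \<and> Ghat_linear T S P"

(* semidirect product G^n \<rtimes> S_n, G^n = extensional functions {1..n} \<rightarrow> G,
   (g,\<sigma>)(h,\<tau>) = (g + \<sigma>\<cdot>h, \<sigma>\<tau>) with (\<sigma>\<cdot>h)_k = h_{\<sigma>^-1 k} *)
definition wreath :: "nat \<Rightarrow> ((nat \<Rightarrow> 'g::ab_group_add) \<times> (nat \<Rightarrow> nat)) monoid" where
  "wreath n = \<lparr> carrier = ({1..n} \<rightarrow>\<^sub>E UNIV) \<times> {\<sigma>. \<sigma> permutes {1..n}},
     mult = (\<lambda>(g,\<sigma>) (h,\<tau>). (restrict (\<lambda>k. g k + h (Hilbert_Choice.inv \<sigma> k)) {1..n}, \<sigma> \<circ> \<tau>)),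
     one = (restrict (\<lambda>k. 0) {1..n}, id) \<rparr>"

definition wreath_sub :: "nat \<Rightarrow> (nat \<Rightarrow> nat) set \<Rightarrow> ((nat \<Rightarrow> 'g::ab_group_add) \<times> (nat \<Rightarrow> nat)) set" where
  "wreath_sub n H = ({1..n} \<rightarrow>\<^sub>E UNIV) \<times> H"

definition Pset :: "nat \<Rightarrow> ((nat \<Rightarrow> 'g::ab_group_add) \<times> (nat \<Rightarrow> nat)) set \<Rightarrow> (nat \<Rightarrow> nat) set" where
  "Pset n C = {\<sigma>. \<sigma> permutes {1..n} \<and> (\<forall>g\<in>{1..n} \<rightarrow>\<^sub>E UNIV. (g,\<sigma>) \<in> C)}"

definition xperm :: "nat \<Rightarrow> (nat \<Rightarrow> nat) \<Rightarrow> (nat \<times> nat,'g::comm_monoid_add) mpol" where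
  "xperm n \<sigma> = (\<Prod>k\<in>{1..n}. PVar (\<sigma> k, k))"

end

theory Submission
  imports Defs
begin

(* S_n acts on the coset space T = (G^n semidirect S_n) / (G^n semidirect H) by left
   multiplication with (0, sigma), and sigma moves the coset of b to the coset of a exactly when
   (0, sigma) lies in the coset of a b^-1, i.e. when sigma is in P(a b^-1).  So it suffices to show
   that every action of S_n on a finite set T yields a \<hat>G-linear representation
   x_AB |-> sum of x_sigma over the sigma with sigma B = A.
   The defining relations of R[M_T] are respected because x_sigma x_tau lies in the ideal of R[M_n]
   for sigma <> tau, while the sets {sigma. sigma B = A} are disjoint along rows and columns of T.
   Comultiplicativity reduces to Delta(x_sigma) = sum over tau of x_(sigma tau^-1) (x) x_tau: in the
   expansion of prod_k sum_j x_(sigma k, j) (x) x_(j, k), every term whose choice j = f(k) is not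
   injective in k contains a relation.  The counit only sees sigma = id, and a \<hat>G-valued point of
   M_n has at most one nonzero entry per column, so at most one x_sigma survives evaluation.
   T has [S_n : H] elements because projecting to S_n maps the cosets of G^n semidirect H
   bijectively onto those of H. *)

section \<open>Evaluation of polynomials\<close>

definition is_ring_hom :: "('c::comm_ring_1 \<Rightarrow> 'r::comm_ring_1) \<Rightarrow> bool" where
  "is_ring_hom e \<longleftrightarrow> e 0 = 0 \<and> e 1 = 1 \<and> (\<forall>x y. e (x + y) = e x + e y) \<and> (\<forall>x y. e (x * y) = e x * e y)"

lemma is_ring_homD:
  assumes "is_ring_hom e"
  shows "e 0 = 0" "e 1 = 1" "e (x + y) = e x + e y" "e (x * y) = e x * e y"
  using assms by (auto simp: is_ring_hom_def)

lemma is_ring_hom_id: "is_ring_hom id"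
  by (simp add: is_ring_hom_def)

lemma is_ring_hom_PConst: "is_ring_hom PConst"
  by (simp add: is_ring_hom_def PConst_def single_add mult_single)

definition monom_eval :: "('v \<Rightarrow> 'r::comm_ring_1) \<Rightarrow> ('v \<Rightarrow>\<^sub>0 nat) \<Rightarrow> 'r" where
  "monom_eval f m = (\<Prod>v\<in>Poly_Mapping.keys m. f v ^ Poly_Mapping.lookup m v)"

lemma peval_conv_monom_eval:
  "peval e f p = (\<Sum>m\<in>Poly_Mapping.keys p. e (Poly_Mapping.lookup p m) * monom_eval f m)"
  by (simp add: peval_def monom_eval_def)

lemma monom_eval_superset:
  assumes "finite V" "Poly_Mapping.keys m \<subseteq> V"
  shows "monom_eval f m = (\<Prod>v\<in>V. f v ^ Poly_Mapping.lookup m v)"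
  unfolding monom_eval_def using assms
  by (intro prod.mono_neutral_left) (auto simp: in_keys_iff)

lemma monom_eval_add: "monom_eval f (a + b) = monom_eval f a * monom_eval f b"
proof -
  let ?V = "Poly_Mapping.keys a \<union> Poly_Mapping.keys b"
  have "monom_eval f (a + b) = (\<Prod>v\<in>?V. f v ^ Poly_Mapping.lookup (a + b) v)"
    by (rule monom_eval_superset) (auto dest: set_mp[OF keys_add])
  also have "\<dots> = (\<Prod>v\<in>?V. f v ^ Poly_Mapping.lookup a v) * (\<Prod>v\<in>?V. f v ^ Poly_Mapping.lookup b v)"
    by (simp add: lookup_add power_add prod.distrib)
  also have "\<dots> = monom_eval f a * monom_eval f b"
    by (simp add: monom_eval_superset[symmetric])
  finally show ?thesis .
qed

lemma monom_eval_0 [simp]: "monom_eval f 0 = 1"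
  by (simp add: monom_eval_def)

lemma poly_mapping_sum_single:
  "p = (\<Sum>a\<in>Poly_Mapping.keys p. Poly_Mapping.single a (Poly_Mapping.lookup p a))"
  by (rule poly_mapping_eqI) (simp add: lookup_sum lookup_single when_def in_keys_iff)

lemma peval_0 [simp]: "peval e f 0 = 0"
  by (simp add: peval_def)

context
  fixes e :: "'c::comm_ring_1 \<Rightarrow> 'r::comm_ring_1"
  assumes e: "is_ring_hom e"
begin

lemma peval_single: "peval e f (Poly_Mapping.single m c) = e c * monom_eval f m"
  by (simp add: peval_conv_monom_eval is_ring_homD[OF e])

lemma peval_add: "peval e f (p + q) = peval e f p + peval e f q"
  unfolding peval_conv_monom_eval
  by (rule setsum_keys_plus_distrib) (simp_all add: is_ring_homD[OF e] algebra_simps)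

lemma peval_sum: "peval e f (sum g A) = (\<Sum>a\<in>A. peval e f (g a))"
  by (induction A rule: infinite_finite_induct) (simp_all add: peval_add)

lemma peval_mult: "peval e f (p * q) = peval e f p * peval e f q"
proof -
  have "p * q = (\<Sum>a\<in>Poly_Mapping.keys p. \<Sum>b\<in>Poly_Mapping.keys q.
      Poly_Mapping.single (a + b) (Poly_Mapping.lookup p a * Poly_Mapping.lookup q b))"
    by (subst poly_mapping_sum_single[of p], subst poly_mapping_sum_single[of q])
      (simp add: sum_product mult_single)
  then have "peval e f (p * q) = (\<Sum>a\<in>Poly_Mapping.keys p. \<Sum>b\<in>Poly_Mapping.keys q.
      e (Poly_Mapping.lookup p a) * monom_eval f a * (e (Poly_Mapping.lookup q b) * monom_eval f b))"
    by (simp add: peval_sum peval_single is_ring_homD[OF e] monom_eval_add mult_ac)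
  also have "\<dots> = peval e f p * peval e f q"
    by (simp add: peval_conv_monom_eval sum_product)
  finally show ?thesis .
qed

lemma peval_1: "peval e f 1 = 1"
  using peval_single[of f 0 1] by (simp add: is_ring_homD[OF e])

lemma peval_prod: "peval e f (prod g A) = (\<Prod>a\<in>A. peval e f (g a))"
  by (induction A rule: infinite_finite_induct) (simp_all add: peval_mult peval_1)

lemma peval_power: "peval e f (p ^ k) = peval e f p ^ k"
  by (induction k) (simp_all add: peval_mult peval_1)

end

lemma peval_PVar [simp]: "is_ring_hom e \<Longrightarrow> peval e f (PVar v) = f v"
  by (simp add: PVar_def peval_single is_ring_homD monom_eval_def)

lemma peval_PConst [simp]: "is_ring_hom e \<Longrightarrow> peval e f (PConst c) = e c"
  by (simp add: PConst_def peval_single is_ring_homD)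

lemma peval_peval:
  assumes "is_ring_hom e"
  shows "peval e g (peval PConst f p) = peval e (\<lambda>v. peval e g (f v)) p"
  by (simp add: peval_conv_monom_eval[of PConst] peval_conv_monom_eval[of e _ p] assms
      peval_sum peval_mult monom_eval_def peval_prod peval_power is_ring_hom_PConst)

lemma peval_cong:
  assumes "p \<in> polys V" "\<And>v. v \<in> V \<Longrightarrow> f v = g v"
  shows "peval e f p = peval e g p"
proof -
  have "monom_eval f m = monom_eval g m" if "m \<in> Poly_Mapping.keys p" for m
    using assms that unfolding monom_eval_def polys_def
    by (intro prod.cong refl arg_cong[where f="\<lambda>x. x ^ _"]) blast
  then show ?thesis unfolding peval_conv_monom_eval by (intro sum.cong) auto
qed

lemma polys_0 [simp]: "0 \<in> polys V"
  by (simp add: polys_def)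

lemma polys_1 [simp]: "1 \<in> polys V"
  by (simp add: polys_def)

lemma polys_PVar: "v \<in> V \<Longrightarrow> PVar v \<in> polys V"
  by (simp add: polys_def PVar_def)

lemma polys_PConst [simp]: "PConst c \<in> polys V"
  by (simp add: polys_def PConst_def)

lemma polys_add: "p \<in> polys V \<Longrightarrow> q \<in> polys V \<Longrightarrow> p + q \<in> polys V"
proof (unfold polys_def, safe)
  fix m x assume p: "\<forall>m\<in>Poly_Mapping.keys p. Poly_Mapping.keys m \<subseteq> V"
    and q: "\<forall>m\<in>Poly_Mapping.keys q. Poly_Mapping.keys m \<subseteq> V"
    and m: "m \<in> Poly_Mapping.keys (p + q)" and x: "x \<in> Poly_Mapping.keys m"
  from m have "m \<in> Poly_Mapping.keys p \<union> Poly_Mapping.keys q" by (rule subsetD[OF keys_add])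
  with p q x show "x \<in> V" by blast
qed

lemma polys_mult: "p \<in> polys V \<Longrightarrow> q \<in> polys V \<Longrightarrow> p * q \<in> polys V"
proof (unfold polys_def, safe)
  fix m x assume p: "\<forall>m\<in>Poly_Mapping.keys p. Poly_Mapping.keys m \<subseteq> V"
    and q: "\<forall>m\<in>Poly_Mapping.keys q. Poly_Mapping.keys m \<subseteq> V"
    and m: "m \<in> Poly_Mapping.keys (p * q)" and x: "x \<in> Poly_Mapping.keys m"
  from m keys_mult obtain a b where "m = a + b" "a \<in> Poly_Mapping.keys p" "b \<in> Poly_Mapping.keys q"
    by blast
  with x keys_add[of a b] p q show "x \<in> V" by blast
qed

lemma polys_sum: "(\<And>a. a \<in> A \<Longrightarrow> f a \<in> polys V) \<Longrightarrow> sum f A \<in> polys V"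
  by (induction A rule: infinite_finite_induct) (auto intro: polys_add)

lemma polys_prod: "(\<And>a. a \<in> A \<Longrightarrow> f a \<in> polys V) \<Longrightarrow> prod f A \<in> polys V"
  by (induction A rule: infinite_finite_induct) (auto intro: polys_mult)

lemma polys_power: "p \<in> polys V \<Longrightarrow> p ^ k \<in> polys V"
  by (induction k) (auto intro: polys_mult)

section \<open>Generated ideals\<close>

lemma gen_ideal_0 [simp]: "0 \<in> gen_ideal V S"
  unfolding gen_ideal_def by (rule CollectI, rule exI[of _ "{}"]) simp

lemma gen_ideal_generator: "q \<in> S \<Longrightarrow> q \<in> gen_ideal V S"
  unfolding gen_ideal_def by (rule CollectI, rule exI[of _ "{q}"], rule exI[of _ "\<lambda>_. 1"]) simp

lemma gen_ideal_add:
  assumes "p \<in> gen_ideal V S" "q \<in> gen_ideal V S"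
  shows "p + q \<in> gen_ideal V S"
proof -
  from assms(1) obtain F c where F: "finite F" "F \<subseteq> S" "\<forall>q\<in>F. c q \<in> polys V" "p = (\<Sum>q\<in>F. c q * q)"
    unfolding gen_ideal_def by auto
  from assms(2) obtain F' c' where F': "finite F'" "F' \<subseteq> S" "\<forall>q\<in>F'. c' q \<in> polys V" "q = (\<Sum>q\<in>F'. c' q * q)"
    unfolding gen_ideal_def by auto
  define d where "d r = (if r \<in> F then c r else 0) + (if r \<in> F' then c' r else 0)" for r
  have "p = (\<Sum>r\<in>F \<union> F'. (if r \<in> F then c r else 0) * r)"
    unfolding F(4) by (rule sym, rule sum.mono_neutral_cong_right) (use F F' in auto)
  moreover have "q = (\<Sum>r\<in>F \<union> F'. (if r \<in> F' then c' r else 0) * r)"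
    unfolding F'(4) by (rule sym, rule sum.mono_neutral_cong_right) (use F F' in auto)
  ultimately have "p + q = (\<Sum>r\<in>F \<union> F'. d r * r)"
    by (simp add: d_def distrib_right sum.distrib)
  moreover have "\<forall>r\<in>F \<union> F'. d r \<in> polys V"
    using F F' by (auto simp: d_def intro!: polys_add)
  ultimately show ?thesis using F F' unfolding gen_ideal_def
    by (intro CollectI exI[of _ "F \<union> F'"] exI[of _ d]) auto
qed

lemma gen_ideal_mult_left:
  assumes "p \<in> gen_ideal V S" "r \<in> polys V"
  shows "r * p \<in> gen_ideal V S"
proof -
  from assms(1) obtain F c where F: "finite F" "F \<subseteq> S" "\<forall>q\<in>F. c q \<in> polys V" "p = (\<Sum>q\<in>F. c q * q)"
    unfolding gen_ideal_def by auto
  have "r * p = (\<Sum>q\<in>F. (r * c q) * q)"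
    using F by (simp add: sum_distrib_left mult.assoc)
  moreover have "\<forall>q\<in>F. r * c q \<in> polys V"
    using F assms(2) by (auto intro: polys_mult)
  ultimately show ?thesis using F unfolding gen_ideal_def
    by (intro CollectI exI[of _ F] exI[of _ "\<lambda>q. r * c q"]) auto
qed

lemma gen_ideal_mult_right: "p \<in> gen_ideal V S \<Longrightarrow> r \<in> polys V \<Longrightarrow> p * r \<in> gen_ideal V S"
  using gen_ideal_mult_left by (metis mult.commute)

lemma gen_ideal_sum: "(\<And>a. a \<in> A \<Longrightarrow> f a \<in> gen_ideal V S) \<Longrightarrow> sum f A \<in> gen_ideal V S"
  by (induction A rule: infinite_finite_induct) (auto intro: gen_ideal_add)

lemma gen_ideal_mult_cong:
  assumes "a - a' \<in> gen_ideal V S" "b - b' \<in> gen_ideal V S" "a' \<in> polys V" "b \<in> polys V"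
  shows "a * b - a' * b' \<in> gen_ideal V S"
proof -
  have "(a - a') * b + a' * (b - b') \<in> gen_ideal V S"
    using assms by (intro gen_ideal_add gen_ideal_mult_left gen_ideal_mult_right)
  then show ?thesis
    by (simp add: algebra_simps)
qed

lemma gen_ideal_prod_cong:
  assumes "\<And>x. x \<in> A \<Longrightarrow> u x - w x \<in> gen_ideal V S"
    and "\<And>x. x \<in> A \<Longrightarrow> u x \<in> polys V" "\<And>x. x \<in> A \<Longrightarrow> w x \<in> polys V"
  shows "prod u A - prod w A \<in> gen_ideal V S"
  using assms
proof (induction A rule: infinite_finite_induct)
  case (insert x F)
  then show ?case
    by (simp, intro gen_ideal_mult_cong) (auto intro: polys_prod)
qed auto

lemma gen_ideal_power_cong:
  assumes "u - w \<in> gen_ideal V S" "u \<in> polys V" "w \<in> polys V"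
  shows "u ^ k - w ^ k \<in> gen_ideal V S"
  using gen_ideal_prod_cong[of "{..<k}" "\<lambda>_. u" "\<lambda>_. w"] assms by simp

lemma gen_ideal_peval_cong:
  assumes "p \<in> polys W" "\<And>v. v \<in> W \<Longrightarrow> f v - g v \<in> gen_ideal V S"
    and "\<And>v. v \<in> W \<Longrightarrow> f v \<in> polys V" "\<And>v. v \<in> W \<Longrightarrow> g v \<in> polys V"
  shows "peval PConst f p - peval PConst g p \<in> gen_ideal V S"
proof -
  have "monom_eval f m - monom_eval g m \<in> gen_ideal V S" if "m \<in> Poly_Mapping.keys p" for m
  proof -
    have "Poly_Mapping.keys m \<subseteq> W"
      using assms(1) that unfolding polys_def by blast
    then show ?thesis
      unfolding monom_eval_def using assms
      by (intro gen_ideal_prod_cong gen_ideal_power_cong polys_power) auto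
  qed
  then have "(\<Sum>m\<in>Poly_Mapping.keys p. PConst (Poly_Mapping.lookup p m) * (monom_eval f m - monom_eval g m))
      \<in> gen_ideal V S"
    by (intro gen_ideal_sum gen_ideal_mult_left polys_PConst)
  then show ?thesis
    by (simp add: peval_conv_monom_eval algebra_simps sum_subtractf)
qed

section \<open>The monomials \<open>x\<^sub>\<sigma>\<close>\<close>

lemma permutes_differ_at:
  assumes "\<sigma> permutes S" "\<tau> permutes S" "\<sigma> \<noteq> \<tau>"
  obtains k where "k \<in> S" "\<sigma> k \<noteq> \<tau> k"
  using assms by (metis ext permutes_not_in)

lemma finite_permutations_atLeastAtMost: "finite {\<sigma>. \<sigma> permutes {1..(n::nat)}}"
  by (rule finite_permutations) simp

lemma Mrels_emb_colI:
  "i \<in> T \<Longrightarrow> j \<in> T \<Longrightarrow> k \<in> T \<Longrightarrow> i \<noteq> j \<Longrightarrow> PVar (e (i, k)) * PVar (e (j, k)) \<in> Mrels_emb e T"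
  unfolding Mrels_emb_def by blast

lemma Mrels_emb_rowI:
  "i \<in> T \<Longrightarrow> j \<in> T \<Longrightarrow> k \<in> T \<Longrightarrow> i \<noteq> j \<Longrightarrow> PVar (e (k, i)) * PVar (e (k, j)) \<in> Mrels_emb e T"
  unfolding Mrels_emb_def by blast

lemma xperm_in_polys: "\<sigma> permutes {1..n} \<Longrightarrow> xperm n \<sigma> \<in> polys ({1..n} \<times> {1..n})"
  unfolding xperm_def by (intro polys_prod polys_PVar) (auto dest: permutes_in_image)

lemma xperm_mult_xperm_in_Mideal:
  assumes "\<sigma> permutes {1..n}" "\<tau> permutes {1..n}" "\<sigma> \<noteq> \<tau>"
  shows "(xperm n \<sigma> * xperm n \<tau> :: (nat \<times> nat, 'g::comm_monoid_add) mpol) \<in> Mideal {1..n}"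
proof -
  obtain k where k: "k \<in> {1..n}" "\<sigma> k \<noteq> \<tau> k"
    using assms by (rule permutes_differ_at)
  let ?rest = "\<lambda>\<rho>. (\<Prod>m\<in>{1..n} - {k}. PVar (\<rho> m, m)) :: (nat \<times> nat, 'g) mpol"
  have "xperm n \<sigma> * xperm n \<tau> = (PVar (\<sigma> k, k) * PVar (\<tau> k, k)) * (?rest \<sigma> * ?rest \<tau>)"
    using k(1) by (simp add: xperm_def prod.remove mult_ac)
  moreover have "PVar (\<sigma> k, k) * PVar (\<tau> k, k) \<in> (Mrels {1..n} :: (nat \<times> nat, 'g) mpol set)"
    using k assms by (intro Mrels_emb_colI[where e = id, simplified]) (auto dest: permutes_in_image)
  moreover have "?rest \<sigma> * ?rest \<tau> \<in> polys ({1..n} \<times> {1..n})"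
    using assms by (intro polys_mult polys_prod polys_PVar) (auto dest: permutes_in_image)
  ultimately show ?thesis
    by (simp add: gen_ideal_mult_right gen_ideal_generator)
qed

lemma sum_xperm_mult_in_Mideal:
  assumes "Q \<subseteq> {\<sigma>. \<sigma> permutes {1..n}}" "Q' \<subseteq> {\<sigma>. \<sigma> permutes {1..n}}" "Q \<inter> Q' = {}"
  shows "(\<Sum>\<sigma>\<in>Q. xperm n \<sigma>) * (\<Sum>\<tau>\<in>Q'. xperm n \<tau>)
    \<in> (Mideal {1..n} :: (nat \<times> nat, 'g::comm_monoid_add) mpol set)"
  unfolding sum_product using assms
  by (intro gen_ideal_sum xperm_mult_xperm_in_Mideal) auto

lemma peval_xperm: "is_ring_hom e \<Longrightarrow> peval e f (xperm n \<sigma>) = (\<Prod>k\<in>{1..n}. f (\<sigma> k, k))"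
  by (simp add: xperm_def peval_prod)

lemma prename_xperm: "prename e (xperm n \<sigma>) = (\<Prod>k\<in>{1..n}. PVar (e (\<sigma> k, k)))"
  by (simp add: prename_def peval_xperm is_ring_hom_PConst)

lemma counit_xperm:
  assumes "\<sigma> permutes {1..n}"
  shows "peval id counit (xperm n \<sigma> :: (nat \<times> nat, 'g::comm_monoid_add) mpol) = (if \<sigma> = id then 1 else 0)"
proof (cases "\<sigma> = id")
  case False
  then obtain k where "k \<in> {1..n}" "\<sigma> k \<noteq> k"
    using assms permutes_id by (metis id_apply permutes_differ_at)
  then have "(\<Prod>j\<in>{1..n}. counit (\<sigma> j, j) :: 'g grpring) = 0"
    by (intro prod_zero) (auto simp: counit_def)
  then show ?thesis
    using False by (simp add: peval_xperm is_ring_hom_id)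
qed (simp add: peval_xperm is_ring_hom_id counit_def)

lemma gelt_mult: "gelt g * gelt h = gelt (g + h)"
  by (simp add: gelt_def mult_single)

lemma Ghat_1: "(1 :: 'g::comm_monoid_add grpring) \<in> Ghat"
  by (simp add: Ghat_def gelt_def range_eqI[of _ _ 0])

lemma Ghat_mult: "x \<in> Ghat \<Longrightarrow> y \<in> Ghat \<Longrightarrow> x * y \<in> Ghat"
  by (auto simp: Ghat_def gelt_mult)

lemma Ghat_prod: "(\<And>a. a \<in> A \<Longrightarrow> f a \<in> Ghat) \<Longrightarrow> prod f A \<in> Ghat"
  by (induction A rule: infinite_finite_induct) (auto intro: Ghat_mult simp: Ghat_1)

lemma gelt_nonzero: "gelt g \<noteq> 0"
  by (simp add: gelt_def)

lemma Ghat_mult_eq_0: "x \<in> Ghat \<Longrightarrow> y \<in> Ghat \<Longrightarrow> x * y = 0 \<Longrightarrow> x = 0 \<or> y = 0"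
  by (auto simp: Ghat_def gelt_mult gelt_nonzero)

lemma Ghat_point_column:
  fixes c :: "'i \<times> 'i \<Rightarrow> 'g::comm_monoid_add grpring"
  assumes Ghat: "\<forall>v\<in>S \<times> S. c v \<in> Ghat" and rels: "\<forall>r\<in>Mrels S. peval id c r = 0"
    and "i \<in> S" "j \<in> S" "k \<in> S" "i \<noteq> j"
  shows "c (i, k) = 0 \<or> c (j, k) = 0"
proof -
  have "PVar (i, k) * PVar (j, k) \<in> (Mrels S :: ('i \<times> 'i, 'g) mpol set)"
    using assms(3-) by (intro Mrels_emb_colI[where e = id, simplified])
  then have "c (i, k) * c (j, k) = 0"
    using rels by (auto simp: peval_mult is_ring_hom_id)
  then show ?thesis
    using Ghat assms(3-) by (intro Ghat_mult_eq_0) auto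
qed

lemma Ghat_point_xperm_unique:
  fixes c :: "nat \<times> nat \<Rightarrow> 'g::comm_monoid_add grpring"
  assumes "\<forall>v\<in>{1..n} \<times> {1..n}. c v \<in> Ghat" "\<forall>r\<in>Mrels {1..n}. peval id c r = 0"
    and \<sigma>: "\<sigma> permutes {1..n}" "(\<Prod>k\<in>{1..n}. c (\<sigma> k, k)) \<noteq> 0"
    and \<tau>: "\<tau> permutes {1..n}" "(\<Prod>k\<in>{1..n}. c (\<tau> k, k)) \<noteq> 0"
  shows "\<sigma> = \<tau>"
proof (rule ccontr)
  assume "\<sigma> \<noteq> \<tau>"
  with \<sigma>(1) \<tau>(1) obtain k where k: "k \<in> {1..n}" "\<sigma> k \<noteq> \<tau> k"
    by (rule permutes_differ_at)
  have "c (\<sigma> k, k) = 0 \<or> c (\<tau> k, k) = 0"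
    using assms(1,2) k \<sigma>(1) \<tau>(1) by (intro Ghat_point_column) (auto dest: permutes_in_image[THEN iffD2])
  then show False
    using k(1) \<sigma>(2) \<tau>(2) by (metis finite_atLeastAtMost prod_zero)
qed

lemma Ghat_point_sum_xperm:
  fixes c :: "nat \<times> nat \<Rightarrow> 'g::comm_monoid_add grpring"
  assumes Ghat: "\<forall>v\<in>{1..n} \<times> {1..n}. c v \<in> Ghat"
    and rels: "\<forall>r\<in>Mrels {1..n}. peval id c r = 0"
    and Q: "Q \<subseteq> {\<sigma>. \<sigma> permutes {1..n}}"
  shows "peval id c (\<Sum>\<sigma>\<in>Q. xperm n \<sigma>) \<in> Ghat"
proof -
  define t where "t \<sigma> = (\<Prod>k\<in>{1..n}. c (\<sigma> k, k))" for \<sigma>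
  have val: "peval id c (\<Sum>\<sigma>\<in>Q. xperm n \<sigma>) = (\<Sum>\<sigma>\<in>Q. t \<sigma>)"
    by (simp add: t_def peval_sum peval_xperm is_ring_hom_id)
  show ?thesis
  proof (cases "\<exists>\<sigma>\<in>Q. t \<sigma> \<noteq> 0")
    case True
    then obtain \<sigma> where \<sigma>: "\<sigma> \<in> Q" "t \<sigma> \<noteq> 0"
      by blast
    have "\<forall>\<rho>\<in>Q - {\<sigma>}. t \<rho> = 0"
      using Ghat_point_xperm_unique[OF Ghat rels] \<sigma> Q unfolding t_def by blast
    then have "(\<Sum>\<sigma>\<in>Q. t \<sigma>) = t \<sigma>"
      using \<sigma>(1) finite_subset[OF Q finite_permutations_atLeastAtMost]
        sum.mono_neutral_right[of Q "{\<sigma>}" t] by simp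
    moreover have "t \<sigma> \<in> Ghat"
      unfolding t_def using Ghat \<sigma>(1) Q
      by (intro Ghat_prod) (blast dest: permutes_in_image[THEN iffD2])
    ultimately show ?thesis
      using val by simp
  next
    case False
    then show ?thesis
      using val by (simp add: Ghat_def)
  qed
qed

lemma polys_peval_PConst:
  assumes "p \<in> polys W" "\<And>v. v \<in> W \<Longrightarrow> g v \<in> polys V"
  shows "peval PConst g p \<in> polys V"
  unfolding peval_conv_monom_eval monom_eval_def
  using assms unfolding polys_def[of W]
  by (blast intro: polys_sum polys_mult polys_prod polys_power polys_PConst)

lemma comult_in_polys:
  "i \<in> S \<Longrightarrow> k \<in> S \<Longrightarrow> comult S (i, k) \<in> polys (Inl ` (S \<times> S) \<union> Inr ` (S \<times> S))"
  unfolding comult_def by (intro polys_sum polys_mult polys_PVar) auto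

lemma bij_betw_restrict_permutes:
  assumes "finite S"
  shows "bij_betw (\<lambda>\<tau>. restrict \<tau> S) {\<tau>. \<tau> permutes S} {f \<in> S \<rightarrow>\<^sub>E S. inj_on f S}"
  unfolding bij_betw_def
proof
  show "inj_on (\<lambda>\<tau>. restrict \<tau> S) {\<tau>. \<tau> permutes S}"
  proof (rule inj_onI, rule ext)
    fix \<tau> \<tau>' x
    assume "\<tau> \<in> {\<tau>. \<tau> permutes S}" "\<tau>' \<in> {\<tau>. \<tau> permutes S}" "restrict \<tau> S = restrict \<tau>' S"
    then show "\<tau> x = \<tau>' x"
      by (cases "x \<in> S") (auto simp: permutes_not_in dest: fun_cong[of _ _ x])
  qed
  show "(\<lambda>\<tau>. restrict \<tau> S) ` {\<tau>. \<tau> permutes S} = {f \<in> S \<rightarrow>\<^sub>E S. inj_on f S}"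
  proof (intro equalityI subsetI)
    fix f assume "f \<in> (\<lambda>\<tau>. restrict \<tau> S) ` {\<tau>. \<tau> permutes S}"
    then obtain \<tau> where "\<tau> permutes S" "f = restrict \<tau> S"
      by blast
    then show "f \<in> {f \<in> S \<rightarrow>\<^sub>E S. inj_on f S}"
      using permutes_inj_on[of \<tau> S] by (auto simp: permutes_in_image inj_on_def)
  next
    fix f assume f: "f \<in> {f \<in> S \<rightarrow>\<^sub>E S. inj_on f S}"
    define \<tau> where "\<tau> x = (if x \<in> S then f x else x)" for x
    have "f ` S = S"
      using f assms by (intro endo_inj_surj) auto
    then have "bij_betw \<tau> S S"
      using f by (auto simp: bij_betw_def \<tau>_def inj_on_def image_def)
    then have "\<tau> permutes S"
      by (rule bij_imp_permutes) (simp add: \<tau>_def)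
    moreover have "restrict \<tau> S = f"
      using f by (auto simp: \<tau>_def fun_eq_iff PiE_def extensional_def)
    ultimately show "f \<in> (\<lambda>\<tau>. restrict \<tau> S) ` {\<tau>. \<tau> permutes S}"
      by blast
  qed
qed

lemma comult_term_non_inj_in_Mideal2:
  assumes f: "f \<in> {1..n} \<rightarrow>\<^sub>E {1..n}" "\<not> inj_on f {1..n}" and \<sigma>: "\<sigma> permutes {1..n}"
  shows "(\<Prod>k\<in>{1..n}. PVar (Inl (\<sigma> k, f k)) * PVar (Inr (f k, k)))
    \<in> (Mideal2 {1..n} :: ((nat \<times> nat) + (nat \<times> nat), 'g::comm_monoid_add) mpol set)"
proof -
  let ?S = "{1..n}" and ?V = "Inl ` ({1..n} \<times> {1..n}) \<union> Inr ` ({1..n} \<times> {1..n})"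
  let ?L = "\<lambda>k. PVar (Inl (\<sigma> k, f k)) :: ((nat \<times> nat) + (nat \<times> nat), 'g) mpol"
  let ?R = "\<lambda>k. PVar (Inr (f k, k)) :: ((nat \<times> nat) + (nat \<times> nat), 'g) mpol"
  obtain k1 k2 where k: "k1 \<in> ?S" "k2 \<in> ?S" "k1 \<noteq> k2" "f k1 = f k2"
    using f(2) unfolding inj_on_def by blast
  have "prod ?R ?S = ?R k1 * prod ?R (?S - {k1})"
    by (rule prod.remove) (use k in auto)
  also have "prod ?R (?S - {k1}) = ?R k2 * prod ?R (?S - {k1} - {k2})"
    by (rule prod.remove) (use k in auto)
  finally have "(\<Prod>k\<in>?S. ?L k * ?R k) = (?R k1 * ?R k2) * (prod ?L ?S * prod ?R (?S - {k1} - {k2}))"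
    by (simp only: prod.distrib mult_ac)
  moreover have "f k1 \<in> ?S"
    using f(1) k(1) by (rule PiE_mem)
  then have "?R k1 * ?R k2 \<in> Mrels_emb Inr ?S"
    using k Mrels_emb_rowI[of k1 ?S k2 "f k1" Inr] by simp
  moreover have "prod ?L ?S * prod ?R (?S - {k1} - {k2}) \<in> polys ?V"
  proof -
    have "f k \<in> ?S" "\<sigma> k \<in> ?S" if "k \<in> ?S" for k
      using PiE_mem[OF f(1) that] permutes_in_image[THEN iffD2, OF \<sigma> that] .
    then show ?thesis
      by (intro polys_mult polys_prod polys_PVar) blast+
  qed
  ultimately show ?thesis
    unfolding Mideal2_def by (simp add: gen_ideal_mult_right gen_ideal_generator)
qed

lemma comult_xperm:
  assumes \<sigma>: "\<sigma> permutes {1..n}"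
  shows "peval PConst (comult {1..n}) (xperm n \<sigma>)
      - (\<Sum>\<tau>\<in>{\<tau>. \<tau> permutes {1..n}}. prename Inl (xperm n (\<sigma> \<circ> inv' \<tau>)) * prename Inr (xperm n \<tau>))
    \<in> (Mideal2 {1..n} :: ((nat \<times> nat) + (nat \<times> nat), 'g::comm_monoid_add) mpol set)"
proof -
  let ?S = "{1..n}"
  define F :: "(nat \<Rightarrow> nat) \<Rightarrow> ((nat \<times> nat) + (nat \<times> nat), 'g) mpol"
    where "F f = (\<Prod>k\<in>?S. PVar (Inl (\<sigma> k, f k)) * PVar (Inr (f k, k)))" for f
  define J where "J = {f \<in> ?S \<rightarrow>\<^sub>E ?S. inj_on f ?S}"
  have "peval PConst (comult ?S) (xperm n \<sigma>) = (\<Sum>f\<in>?S \<rightarrow>\<^sub>E ?S. F f)"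
    by (simp add: peval_xperm is_ring_hom_PConst comult_def F_def prod_sum_PiE)
  also have "\<dots> = (\<Sum>f\<in>(?S \<rightarrow>\<^sub>E ?S) - J. F f) + (\<Sum>f\<in>J. F f)"
    by (rule sum.subset_diff) (auto simp: J_def finite_PiE)
  finally have split: "peval PConst (comult ?S) (xperm n \<sigma>) = (\<Sum>f\<in>(?S \<rightarrow>\<^sub>E ?S) - J. F f) + (\<Sum>f\<in>J. F f)" .
  have "F (restrict \<tau> ?S) = prename Inl (xperm n (\<sigma> \<circ> inv' \<tau>)) * prename Inr (xperm n \<tau>)"
    if \<tau>: "\<tau> permutes ?S" for \<tau>
  proof -
    have "(\<Prod>k\<in>?S. PVar (Inl ((\<sigma> \<circ> inv' \<tau>) (\<tau> k), \<tau> k)))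
        = (\<Prod>k\<in>?S. PVar (Inl ((\<sigma> \<circ> inv' \<tau>) k, k)) :: ((nat \<times> nat) + (nat \<times> nat), 'g) mpol)"
      by (rule prod.reindex_bij_betw[OF permutes_imp_bij[OF \<tau>]])
    then show ?thesis
      using \<tau> by (simp add: F_def prename_xperm prod.distrib permutes_inverses)
  qed
  then have "(\<Sum>f\<in>J. F f)
      = (\<Sum>\<tau>\<in>{\<tau>. \<tau> permutes ?S}. prename Inl (xperm n (\<sigma> \<circ> inv' \<tau>)) * prename Inr (xperm n \<tau>))"
    unfolding J_def by (simp add: sum.reindex_bij_betw[symmetric, OF bij_betw_restrict_permutes])
  moreover have "(\<Sum>f\<in>(?S \<rightarrow>\<^sub>E ?S) - J. F f) \<in> Mideal2 ?S"
    unfolding Mideal2_def F_def J_def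
    by (intro gen_ideal_sum comult_term_non_inj_in_Mideal2[unfolded Mideal2_def] \<sigma>) auto
  ultimately show ?thesis
    using split by simp
qed

section \<open>Representations from permutation actions\<close>

locale perm_action =
  fixes n :: nat and T :: "'a set" and act :: "(nat \<Rightarrow> nat) \<Rightarrow> 'a \<Rightarrow> 'a"
  assumes act_closed: "\<sigma> permutes {1..n} \<Longrightarrow> A \<in> T \<Longrightarrow> act \<sigma> A \<in> T"
    and act_id: "A \<in> T \<Longrightarrow> act id A = A"
    and act_comp: "\<rho> permutes {1..n} \<Longrightarrow> \<tau> permutes {1..n} \<Longrightarrow> A \<in> T \<Longrightarrow> act (\<rho> \<circ> \<tau>) A = act \<rho> (act \<tau> A)"
begin

definition transporter :: "'a \<Rightarrow> 'a \<Rightarrow> (nat \<Rightarrow> nat) set" where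
  "transporter A B = {\<sigma>. \<sigma> permutes {1..n} \<and> act \<sigma> B = A}"

definition rep_poly :: "'a \<times> 'a \<Rightarrow> (nat \<times> nat, 'g::comm_monoid_add) mpol" where
  "rep_poly v = (\<Sum>\<sigma>\<in>transporter (fst v) (snd v). xperm n \<sigma>)"

lemma transporter_subset: "transporter A B \<subseteq> {\<sigma>. \<sigma> permutes {1..n}}"
  by (auto simp: transporter_def)

lemma act_inj:
  assumes "\<sigma> permutes {1..n}" "A \<in> T" "B \<in> T" "act \<sigma> A = act \<sigma> B"
  shows "A = B"
proof -
  have "act (inv' \<sigma> \<circ> \<sigma>) X = X" if "X \<in> T" for X
    using assms(1) that by (simp add: permutes_inv_o act_id)
  then show ?thesis
    using assms by (metis act_comp permutes_inv)
qed

lemma transporter_disjoint_left: "A \<noteq> B \<Longrightarrow> transporter A C \<inter> transporter B C = {}"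
  by (auto simp: transporter_def)

lemma transporter_disjoint_right:
  "A \<in> T \<Longrightarrow> B \<in> T \<Longrightarrow> A \<noteq> B \<Longrightarrow> transporter C A \<inter> transporter C B = {}"
  unfolding transporter_def by (blast dest: act_inj)

lemma id_mem_transporter_iff: "B \<in> T \<Longrightarrow> id \<in> transporter A B \<longleftrightarrow> A = B"
  by (auto simp: transporter_def act_id)

lemma comp_mem_transporter_iff:
  assumes "\<tau> permutes {1..n}" "B \<in> T"
  shows "\<rho> \<circ> \<tau> \<in> transporter A B \<longleftrightarrow> \<rho> \<in> transporter A (act \<tau> B)"
proof -
  have "\<rho> \<circ> \<tau> permutes {1..n} \<longleftrightarrow> \<rho> permutes {1..n}"
    using assms(1) by (metis comp_id permutes_compose permutes_inv permutes_inv_o(1) o_assoc)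
  then show ?thesis
    using assms by (auto simp: transporter_def act_comp)
qed

lemma rep_poly_in_polys: "rep_poly v \<in> polys ({1..n} \<times> {1..n})"
  unfolding rep_poly_def using transporter_subset by (intro polys_sum xperm_in_polys) auto

lemma rep_poly_Mrels:
  assumes "r \<in> Mrels T"
  shows "peval PConst rep_poly r \<in> (Mideal {1..n} :: (nat \<times> nat, 'g::comm_monoid_add) mpol set)"
proof -
  have "(rep_poly v * rep_poly w :: (nat \<times> nat, 'g) mpol) \<in> Mideal {1..n}"
    if "transporter (fst v) (snd v) \<inter> transporter (fst w) (snd w) = {}" for v w
    unfolding rep_poly_def using that transporter_subset by (intro sum_xperm_mult_in_Mideal)
  with assms show ?thesis
    unfolding Mrels_emb_def
    by (auto simp: peval_mult is_ring_hom_PConst transporter_disjoint_left transporter_disjoint_right)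
qed

lemma rep_poly_counit:
  assumes "p \<in> polys (T \<times> T)"
  shows "peval id counit (peval PConst (rep_poly :: _ \<Rightarrow> (nat \<times> nat, 'g::comm_monoid_add) mpol) p)
    = peval id counit p"
proof -
  have "peval id counit (rep_poly (A, B) :: (nat \<times> nat, 'g) mpol) = counit (A, B)"
    if "A \<in> T" "B \<in> T" for A B
  proof -
    have "peval id counit (rep_poly (A, B) :: (nat \<times> nat, 'g) mpol)
        = (\<Sum>\<sigma>\<in>transporter A B. if \<sigma> = id then 1 else 0)"
      unfolding rep_poly_def peval_sum[OF is_ring_hom_id] using transporter_subset
      by (intro sum.cong counit_xperm) auto
    also have "\<dots> = counit (A, B)"
      using finite_subset[OF transporter_subset finite_permutations_atLeastAtMost] that
      by (simp add: counit_def id_mem_transporter_iff eq_commute)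
    finally show ?thesis .
  qed
  then show ?thesis
    using assms by (auto simp: peval_peval is_ring_hom_id intro: peval_cong)
qed

lemma rep_poly_Ghat_linear: "Ghat_linear T {1..n} rep_poly"
  unfolding Ghat_linear_def rep_poly_def
  using transporter_subset by (blast intro: Ghat_point_sum_xperm)

lemma sum_transporter_comp_inv:
  assumes "\<tau> permutes {1..n}" "B \<in> T"
  shows "(\<Sum>\<sigma>\<in>transporter A B. h (\<sigma> \<circ> inv' \<tau>)) = (\<Sum>\<rho>\<in>transporter A (act \<tau> B). h \<rho>)"
proof (rule sum.reindex_bij_witness[where i = "\<lambda>\<rho>. \<rho> \<circ> \<tau>" and j = "\<lambda>\<sigma>. \<sigma> \<circ> inv' \<tau>"])
  show "\<sigma> \<circ> inv' \<tau> \<circ> \<tau> = \<sigma>" for \<sigma>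
    using assms(1) by (simp add: o_assoc[symmetric] permutes_inv_o)
  show "\<rho> \<circ> \<tau> \<circ> inv' \<tau> = \<rho>" for \<rho>
    using assms(1) by (simp add: o_assoc[symmetric] permutes_inv_o)
  show "\<rho> \<circ> \<tau> \<in> transporter A B" if "\<rho> \<in> transporter A (act \<tau> B)" for \<rho>
    using that assms by (simp add: comp_mem_transporter_iff)
  show "\<sigma> \<circ> inv' \<tau> \<in> transporter A (act \<tau> B)" if "\<sigma> \<in> transporter A B" for \<sigma>
    using that assms comp_mem_transporter_iff[of \<tau> B "\<sigma> \<circ> inv' \<tau>" A]
    by (simp add: o_assoc[symmetric] permutes_inv_o)
qed simp

lemma prename_rep_poly:
  "prename e (rep_poly (A, B)) = (\<Sum>\<sigma>\<in>transporter A B. prename e (xperm n \<sigma>))"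
  by (simp add: rep_poly_def prename_def peval_sum is_ring_hom_PConst)

lemma sum_transporter_regroup:
  fixes L R :: "(nat \<Rightarrow> nat) \<Rightarrow> 'b::comm_semiring_0"
  assumes "finite T" "B \<in> T"
  shows "(\<Sum>\<sigma>\<in>transporter A B. \<Sum>\<tau>\<in>{\<tau>. \<tau> permutes {1..n}}. L (\<sigma> \<circ> inv' \<tau>) * R \<tau>)
    = (\<Sum>C\<in>T. (\<Sum>\<rho>\<in>transporter A C. L \<rho>) * (\<Sum>\<tau>\<in>transporter C B. R \<tau>))"
proof -
  let ?perms = "{\<tau>. \<tau> permutes {1..n}}"
  have "(\<Sum>\<sigma>\<in>transporter A B. \<Sum>\<tau>\<in>?perms. L (\<sigma> \<circ> inv' \<tau>) * R \<tau>)
      = (\<Sum>\<tau>\<in>?perms. \<Sum>\<sigma>\<in>transporter A B. L (\<sigma> \<circ> inv' \<tau>) * R \<tau>)"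
    by (rule sum.swap)
  also have "\<dots> = (\<Sum>\<tau>\<in>?perms. \<Sum>\<rho>\<in>transporter A (act \<tau> B). L \<rho> * R \<tau>)"
  proof (rule sum.cong[OF refl])
    fix \<tau> assume "\<tau> \<in> ?perms"
    then show "(\<Sum>\<sigma>\<in>transporter A B. L (\<sigma> \<circ> inv' \<tau>) * R \<tau>) = (\<Sum>\<rho>\<in>transporter A (act \<tau> B). L \<rho> * R \<tau>)"
      using sum_transporter_comp_inv[of \<tau> B "\<lambda>\<rho>. L \<rho> * R \<tau>" A] assms(2) by simp
  qed
  \<comment> \<open>group the permutations \<open>\<tau>\<close> by the coset \<open>C = act \<tau> B\<close>\<close>
  also have "\<dots> = (\<Sum>C\<in>T. \<Sum>\<tau>\<in>{\<tau>. \<tau> \<in> ?perms \<and> act \<tau> B = C}.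
      \<Sum>\<rho>\<in>transporter A (act \<tau> B). L \<rho> * R \<tau>)"
    using assms act_closed finite_permutations_atLeastAtMost
    by (intro sum.group[where g = "\<lambda>\<tau>. act \<tau> B", symmetric]) auto
  also have "\<dots> = (\<Sum>C\<in>T. \<Sum>\<tau>\<in>transporter C B. \<Sum>\<rho>\<in>transporter A C. L \<rho> * R \<tau>)"
    by (intro sum.cong refl) (auto simp: transporter_def)
  also have "\<dots> = (\<Sum>C\<in>T. (\<Sum>\<rho>\<in>transporter A C. L \<rho>) * (\<Sum>\<tau>\<in>transporter C B. R \<tau>))"
    by (intro sum.cong refl, simp only: sum_product, rule sum.swap)
  finally show ?thesis .
qed

lemma comult_rep_poly:
  assumes "finite T" "A \<in> T" "B \<in> T"
  shows "peval PConst (comult {1..n}) (rep_poly (A, B))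
      - (\<Sum>C\<in>T. prename Inl (rep_poly (A, C)) * prename Inr (rep_poly (C, B)))
    \<in> (Mideal2 {1..n} :: ((nat \<times> nat) + (nat \<times> nat), 'g::comm_monoid_add) mpol set)"
proof -
  let ?perms = "{\<tau>. \<tau> permutes {1..n}}"
  define L :: "(nat \<Rightarrow> nat) \<Rightarrow> ((nat \<times> nat) + (nat \<times> nat), 'g) mpol"
    where "L \<rho> = prename Inl (xperm n \<rho> :: (nat \<times> nat, 'g) mpol)" for \<rho>
  define R :: "(nat \<Rightarrow> nat) \<Rightarrow> ((nat \<times> nat) + (nat \<times> nat), 'g) mpol"
    where "R \<tau> = prename Inr (xperm n \<tau> :: (nat \<times> nat, 'g) mpol)" for \<tau>
  have regroup: "(\<Sum>\<sigma>\<in>transporter A B. \<Sum>\<tau>\<in>?perms. L (\<sigma> \<circ> inv' \<tau>) * R \<tau>)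
      = (\<Sum>C\<in>T. prename Inl (rep_poly (A, C)) * prename Inr (rep_poly (C, B)))"
    unfolding sum_transporter_regroup[OF assms(1,3)] by (simp add: L_def R_def prename_rep_poly)
  have "peval PConst (comult {1..n}) (rep_poly (A, B) :: (nat \<times> nat, 'g) mpol)
      - (\<Sum>\<sigma>\<in>transporter A B. \<Sum>\<tau>\<in>?perms. L (\<sigma> \<circ> inv' \<tau>) * R \<tau>)
    = (\<Sum>\<sigma>\<in>transporter A B. peval PConst (comult {1..n}) (xperm n \<sigma> :: (nat \<times> nat, 'g) mpol)
      - (\<Sum>\<tau>\<in>?perms. L (\<sigma> \<circ> inv' \<tau>) * R \<tau>))"
    by (simp add: rep_poly_def peval_sum is_ring_hom_PConst sum_subtractf)
  also have "\<dots> \<in> Mideal2 {1..n}"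
    unfolding L_def R_def Mideal2_def using transporter_subset
    by (intro gen_ideal_sum comult_xperm[unfolded Mideal2_def]) auto
  finally show ?thesis
    by (simp only: regroup)
qed

lemma rep_poly_comult:
  assumes "finite T" "p \<in> polys (T \<times> T)"
  shows "peval PConst (comult {1..n}) (peval PConst rep_poly p)
      - peval PConst (\<lambda>w. case w of Inl v \<Rightarrow> prename Inl (rep_poly v) | Inr v \<Rightarrow> prename Inr (rep_poly v))
          (peval PConst (comult T) p)
    \<in> (Mideal2 {1..n} :: ((nat \<times> nat) + (nat \<times> nat), 'g::comm_monoid_add) mpol set)"
proof -
  let ?V = "Inl ` ({1..n} \<times> {1..n}) \<union> Inr ` ({1..n} \<times> {1..n})"
  let ?P = "rep_poly :: _ \<Rightarrow> (nat \<times> nat, 'g) mpol"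
  define tensor where
    "tensor w = (case w of Inl v \<Rightarrow> prename Inl (?P v) | Inr v \<Rightarrow> prename Inr (?P v))" for w
  have tensor_in_polys: "tensor w \<in> polys ?V" for w
    unfolding tensor_def prename_def using rep_poly_in_polys
    by (auto split: sum.split intro!: polys_peval_PConst polys_PVar)
  have "peval PConst (comult {1..n}) (?P v) - peval PConst tensor (comult T v) \<in> Mideal2 {1..n}"
    if "v \<in> T \<times> T" for v
    using that assms(1) comult_rep_poly
    by (auto simp: comult_def tensor_def peval_sum peval_mult is_ring_hom_PConst)
  moreover have "peval PConst (comult {1..n}) (?P v) \<in> polys ?V" for v
    using rep_poly_in_polys by (blast intro: polys_peval_PConst comult_in_polys)
  moreover have "peval PConst tensor (comult T v) \<in> polys ?V" for v
    unfolding comult_def by (intro polys_peval_PConst tensor_in_polys polys_sum polys_mult) (rule polys_PVar, blast)+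
  ultimately show ?thesis
    using assms(2) unfolding Mideal2_def tensor_def[symmetric]
    by (simp add: peval_peval is_ring_hom_PConst gen_ideal_peval_cong)
qed

theorem Ghat_rep_rep_poly: "finite T \<Longrightarrow> Ghat_rep T {1..n} rep_poly"
  unfolding Ghat_rep_def bialg_hom_def
  by (intro conjI ballI rep_poly_in_polys rep_poly_Mrels rep_poly_comult rep_poly_counit
      rep_poly_Ghat_linear)

end

section \<open>Cosets\<close>

lemma (in group_hom) subgroup_vimage:
  "subgroup N H \<Longrightarrow> subgroup {x \<in> carrier G. h x \<in> N} G"
  by unfold_locales (auto simp: subgroup.m_closed subgroup.m_inv_closed subgroup.one_closed)

lemma (in group_hom) normal_vimage:
  assumes "N \<lhd> H"
  shows "{x \<in> carrier G. h x \<in> N} \<lhd> G"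
  using assms subgroup_vimage[OF normal_imp_subgroup[OF assms]]
  by (simp add: G.normal_inv_iff normal.inv_op_closed2)

lemma (in group_hom) image_r_coset_vimage:
  assumes N: "subgroup N H" and surj: "h ` carrier G = carrier H" and x: "x \<in> carrier G"
  shows "h ` ({x \<in> carrier G. h x \<in> N} #>\<^bsub>G\<^esub> x) = N #>\<^bsub>H\<^esub> h x"
proof
  let ?K = "{x \<in> carrier G. h x \<in> N}"
  show "h ` (?K #>\<^bsub>G\<^esub> x) \<subseteq> N #>\<^bsub>H\<^esub> h x"
    using x by (auto simp: r_coset_def)
  show "N #>\<^bsub>H\<^esub> h x \<subseteq> h ` (?K #>\<^bsub>G\<^esub> x)"
  proof
    fix y assume "y \<in> N #>\<^bsub>H\<^esub> h x"
    then obtain k where "k \<in> N" "y = k \<otimes>\<^bsub>H\<^esub> h x"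
      by (auto simp: r_coset_def)
    moreover obtain k' where "k' \<in> carrier G" "k = h k'"
      using \<open>k \<in> N\<close> subgroup.subset[OF N] surj by blast
    ultimately have "y = h (k' \<otimes> x)" "k' \<otimes> x \<in> ?K #>\<^bsub>G\<^esub> x"
      using x by (auto simp: r_coset_def)
    then show "y \<in> h ` (?K #>\<^bsub>G\<^esub> x)"
      by blast
  qed
qed

lemma (in group_hom) bij_betw_rcosets_vimage:
  assumes N: "subgroup N H" and surj: "h ` carrier G = carrier H"
  shows "bij_betw (\<lambda>C. h ` C) (rcosets\<^bsub>G\<^esub> {x \<in> carrier G. h x \<in> N}) (rcosets\<^bsub>H\<^esub> N)"
proof -
  let ?K = "{x \<in> carrier G. h x \<in> N}"
  have K: "subgroup ?K G"
    using N by (rule subgroup_vimage)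
  note image = image_r_coset_vimage[OF N surj]
  have "inj_on (\<lambda>C. h ` C) (rcosets\<^bsub>G\<^esub> ?K)"
  proof (rule inj_onI, clarsimp simp: RCOSETS_def image)
    fix x y assume xy: "x \<in> carrier G" "y \<in> carrier G" "N #>\<^bsub>H\<^esub> h x = N #>\<^bsub>H\<^esub> h y"
    then have "h x \<otimes>\<^bsub>H\<^esub> inv\<^bsub>H\<^esub> h y \<in> N"
      using subgroup.rcos_module_imp[OF N H.is_group] H.rcos_self[OF _ N] by (metis hom_closed)
    then have "x \<in> ?K #>\<^bsub>G\<^esub> y"
      using xy subgroup.rcos_module[OF K G.is_group] by simp
    then show "?K #>\<^bsub>G\<^esub> x = ?K #>\<^bsub>G\<^esub> y"
      using xy K by (metis G.repr_independence)
  qed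
  moreover have "rcosets\<^bsub>G\<^esub> ?K = (\<lambda>x. ?K #>\<^bsub>G\<^esub> x) ` carrier G"
    "rcosets\<^bsub>H\<^esub> N = (\<lambda>y. N #>\<^bsub>H\<^esub> y) ` h ` carrier G"
    using surj by (auto simp: RCOSETS_def)
  then have "(\<lambda>C. h ` C) ` (rcosets\<^bsub>G\<^esub> ?K) = rcosets\<^bsub>H\<^esub> N"
    by (simp add: image_image image cong: image_cong)
  ultimately show ?thesis
    by (simp add: bij_betw_def)
qed

lemma (in normal) l_coset_r_coset:
  assumes "a \<in> carrier G" "x \<in> carrier G"
  shows "a <# (H #> x) = H #> (a \<otimes> x)"
proof -
  have "a <# (H #> x) = (a <# H) #> x"
    using assms by (force simp: l_coset_def r_coset_def m_assoc)
  also have "\<dots> = H #> (a \<otimes> x)"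
    using assms by (simp add: coset_eq[rule_format, symmetric] coset_mult_assoc subset)
  finally show ?thesis .
qed

lemma (in normal) l_coset_in_rcosets: "a \<in> carrier G \<Longrightarrow> C \<in> rcosets H \<Longrightarrow> a <# C \<in> rcosets H"
  by (auto simp: RCOSETS_def l_coset_r_coset)

lemma (in normal) mem_r_coset_mult_inv_iff:
  assumes "x \<in> carrier G" "a \<in> carrier G" "b \<in> carrier G"
  shows "x \<in> H #> (a \<otimes> inv b) \<longleftrightarrow> x <# (H #> b) = H #> a"
proof -
  have "x \<in> H #> (a \<otimes> inv b) \<longleftrightarrow> x \<otimes> b \<otimes> inv a \<in> H"
    using assms by (simp add: rcos_module inv_mult_group m_assoc)
  also have "\<dots> \<longleftrightarrow> x \<otimes> b \<in> H #> a"
    using assms by (simp add: rcos_module)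
  also have "\<dots> \<longleftrightarrow> H #> (x \<otimes> b) = H #> a"
    using assms by (metis m_closed repr_independence repr_independenceD is_subgroup)
  finally show ?thesis
    using assms by (simp add: l_coset_r_coset)
qed

section \<open>The wreath product\<close>

lemma wreath_carrier:
  "carrier (wreath n) = ({1..n} \<rightarrow>\<^sub>E UNIV) \<times> {\<sigma>. \<sigma> permutes {1..n}}"
  by (simp add: wreath_def)

lemma wreath_mult:
  "(g, \<sigma>) \<otimes>\<^bsub>wreath n\<^esub> (h, \<tau>) = (\<lambda>k\<in>{1..n}. g k + h (inv' \<sigma> k), \<sigma> \<circ> \<tau>)"
  by (simp add: wreath_def)

lemma wreath_one: "\<one>\<^bsub>wreath n\<^esub> = (\<lambda>k\<in>{1..n}. 0, id)"
  by (simp add: wreath_def)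

lemma group_wreath: "group (wreath n :: ((nat \<Rightarrow> 'g::ab_group_add) \<times> (nat \<Rightarrow> nat)) monoid)"
proof (rule groupI)
  fix x y z :: "(nat \<Rightarrow> 'g) \<times> (nat \<Rightarrow> nat)"
  assume x: "x \<in> carrier (wreath n)" and y: "y \<in> carrier (wreath n)" and z: "z \<in> carrier (wreath n)"
  then show "x \<otimes>\<^bsub>wreath n\<^esub> y \<in> carrier (wreath n)"
    by (cases x, cases y) (auto simp: wreath_carrier wreath_mult permutes_compose)
  obtain g \<sigma> h \<tau> l \<rho> where xyz: "x = (g, \<sigma>)" "y = (h, \<tau>)" "z = (l, \<rho>)"
    and perms: "\<sigma> permutes {1..n}" "\<tau> permutes {1..n}"
    using x y z by (auto simp: wreath_carrier)
  have "inv' \<sigma> k \<in> {1..n}" if "k \<in> {1..n}" for k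
    using permutes_in_image[THEN iffD2, OF permutes_inv[OF perms(1)] that] .
  then show "x \<otimes>\<^bsub>wreath n\<^esub> y \<otimes>\<^bsub>wreath n\<^esub> z = x \<otimes>\<^bsub>wreath n\<^esub> (y \<otimes>\<^bsub>wreath n\<^esub> z)"
    unfolding xyz wreath_mult
    using perms by (auto simp: fun_eq_iff o_inv_distrib permutes_bij add.assoc o_assoc)
next
  show "\<one>\<^bsub>wreath n\<^esub> \<in> carrier (wreath n :: ((nat \<Rightarrow> 'g) \<times> (nat \<Rightarrow> nat)) monoid)"
    by (simp add: wreath_carrier wreath_one)
next
  fix x :: "(nat \<Rightarrow> 'g) \<times> (nat \<Rightarrow> nat)"
  assume "x \<in> carrier (wreath n)"
  then obtain g \<sigma> where x: "x = (g, \<sigma>)" "g \<in> {1..n} \<rightarrow>\<^sub>E UNIV" "\<sigma> permutes {1..n}"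
    by (auto simp: wreath_carrier)
  show "\<one>\<^bsub>wreath n\<^esub> \<otimes>\<^bsub>wreath n\<^esub> x = x"
    using x by (auto simp: wreath_one wreath_mult fun_eq_iff PiE_arb[of g])
  show "\<exists>y\<in>carrier (wreath n). y \<otimes>\<^bsub>wreath n\<^esub> x = \<one>\<^bsub>wreath n\<^esub>"
  proof
    show "(\<lambda>k\<in>{1..n}. - g (\<sigma> k), inv' \<sigma>) \<otimes>\<^bsub>wreath n\<^esub> x = \<one>\<^bsub>wreath n\<^esub>"
      using x by (auto simp: wreath_one wreath_mult fun_eq_iff permutes_inv_inv permutes_inverses)
    show "(\<lambda>k\<in>{1..n}. - g (\<sigma> k), inv' \<sigma>) \<in> carrier (wreath n)"
      using x by (simp add: wreath_carrier permutes_inv)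
  qed
qed

lemma group_hom_snd_wreath:
  "group_hom (wreath n :: ((nat \<Rightarrow> 'g::ab_group_add) \<times> (nat \<Rightarrow> nat)) monoid) (sym_group n) snd"
  by (intro group_hom.intro group_wreath sym_group_is_group group_hom_axioms.intro)
    (auto simp: hom_def wreath_carrier sym_group_carrier sym_group_mult wreath_mult)

lemma snd_image_wreath: "snd ` carrier (wreath n) = carrier (sym_group n)"
  by (auto simp: wreath_carrier sym_group_carrier image_iff PiE_eq_empty_iff)

lemma wreath_sub_eq_vimage:
  "H \<subseteq> carrier (sym_group n) \<Longrightarrow> wreath_sub n H = {x \<in> carrier (wreath n). snd x \<in> H}"
  by (auto simp: wreath_sub_def wreath_carrier sym_group_carrier)

lemma normal_wreath_sub:
  assumes "H \<lhd> sym_group n"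
  shows "wreath_sub n H \<lhd> (wreath n :: ((nat \<Rightarrow> 'g::ab_group_add) \<times> (nat \<Rightarrow> nat)) monoid)"
proof -
  have "wreath_sub n H = {x \<in> carrier (wreath n :: ((nat \<Rightarrow> 'g) \<times> (nat \<Rightarrow> nat)) monoid). snd x \<in> H}"
    using subgroup.subset[OF normal_imp_subgroup[OF assms]] by (rule wreath_sub_eq_vimage)
  then show ?thesis
    using group_hom.normal_vimage[OF group_hom_snd_wreath assms] by simp
qed

definition perm_embed :: "nat \<Rightarrow> (nat \<Rightarrow> nat) \<Rightarrow> (nat \<Rightarrow> 'g::zero) \<times> (nat \<Rightarrow> nat)" where
  "perm_embed n \<sigma> = (\<lambda>k\<in>{1..n}. 0, \<sigma>)"

lemma perm_embed_in_carrier: "\<sigma> permutes {1..n} \<Longrightarrow> perm_embed n \<sigma> \<in> carrier (wreath n)"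
  by (simp add: perm_embed_def wreath_carrier)

lemma perm_embed_id: "perm_embed n id = \<one>\<^bsub>wreath n\<^esub>"
  by (simp add: perm_embed_def wreath_one)

lemma perm_embed_comp:
  assumes "\<rho> permutes {1..n}"
  shows "perm_embed n (\<rho> \<circ> \<tau>) = perm_embed n \<rho> \<otimes>\<^bsub>wreath n\<^esub> perm_embed n \<tau>"
proof -
  have "inv' \<rho> k \<in> {1..n}" if "k \<in> {1..n}" for k
    using permutes_in_image[THEN iffD2, OF permutes_inv[OF assms] that] .
  then show ?thesis
    by (auto simp: perm_embed_def wreath_mult)
qed

lemma perm_action_wreath_cosets:
  assumes "H \<lhd> sym_group n"
  shows "perm_action n (carrier ((wreath n :: ((nat \<Rightarrow> 'g::ab_group_add) \<times> (nat \<Rightarrow> nat)) monoid) Mod wreath_sub n H))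
    (\<lambda>\<sigma> C. perm_embed n \<sigma> <#\<^bsub>wreath n\<^esub> C)"
proof -
  let ?W = "wreath n :: ((nat \<Rightarrow> 'g) \<times> (nat \<Rightarrow> nat)) monoid"
  interpret normal "wreath_sub n H" ?W
    using assms by (rule normal_wreath_sub)
  have sub: "C \<subseteq> carrier ?W" if "C \<in> carrier (?W Mod wreath_sub n H)" for C
    using that rcosets_carrier[OF is_group] by (simp add: FactGroup_def)
  show ?thesis
  proof
    fix \<sigma> C assume "\<sigma> permutes {1..n}" "C \<in> carrier (?W Mod wreath_sub n H)"
    then show "perm_embed n \<sigma> <#\<^bsub>?W\<^esub> C \<in> carrier (?W Mod wreath_sub n H)"
      by (simp add: FactGroup_def l_coset_in_rcosets perm_embed_in_carrier)
  next
    fix C assume "C \<in> carrier (?W Mod wreath_sub n H)"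
    then show "perm_embed n id <#\<^bsub>?W\<^esub> C = C"
      by (simp add: perm_embed_id lcos_mult_one sub)
  next
    fix \<rho> \<tau> C
    assume "\<rho> permutes {1..n}" "\<tau> permutes {1..n}" "C \<in> carrier (?W Mod wreath_sub n H)"
    then show "perm_embed n (\<rho> \<circ> \<tau>) <#\<^bsub>?W\<^esub> C
        = perm_embed n \<rho> <#\<^bsub>?W\<^esub> (perm_embed n \<tau> <#\<^bsub>?W\<^esub> C)"
      by (simp add: perm_embed_comp lcos_m_assoc perm_embed_in_carrier sub)
  qed
qed

lemma Pset_r_coset_wreath:
  assumes "H \<lhd> sym_group n" "c \<in> carrier (wreath n)"
  shows "Pset n (wreath_sub n H #>\<^bsub>wreath n\<^esub> c)
    = {\<sigma>. \<sigma> permutes {1..n} \<and> (perm_embed n \<sigma> :: (nat \<Rightarrow> 'g::ab_group_add) \<times> _) \<in> wreath_sub n H #>\<^bsub>wreath n\<^esub> c}"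
proof -
  let ?W = "wreath n :: ((nat \<Rightarrow> 'g) \<times> (nat \<Rightarrow> nat)) monoid" and ?K = "wreath_sub n H"
  interpret normal ?K ?W
    using assms(1) by (rule normal_wreath_sub)
  have id_H: "id \<in> H"
    using subgroup.one_closed[OF normal_imp_subgroup[OF assms(1)]] by (simp add: sym_group_one)
  have "(g, \<sigma>) \<in> ?K #>\<^bsub>?W\<^esub> c"
    if \<sigma>: "\<sigma> permutes {1..n}" "perm_embed n \<sigma> \<in> ?K #>\<^bsub>?W\<^esub> c" and g: "g \<in> {1..n} \<rightarrow>\<^sub>E UNIV" for g \<sigma>
  proof -
    have "(g, \<sigma>) = (g, id) \<otimes>\<^bsub>?W\<^esub> perm_embed n \<sigma>"
      using g by (simp add: perm_embed_def wreath_mult cong: restrict_cong)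
    also have "\<dots> \<in> ?K #>\<^bsub>?W\<^esub> perm_embed n \<sigma>"
      using g id_H \<sigma>(1) by (intro rcosI subset perm_embed_in_carrier) (simp add: wreath_sub_def)
    also have "\<dots> = ?K #>\<^bsub>?W\<^esub> c"
      using \<sigma>(2) assms(2) is_subgroup by (metis repr_independence)
    finally show ?thesis .
  qed
  moreover have "perm_embed n \<sigma> = ((\<lambda>k\<in>{1..n}. 0) :: nat \<Rightarrow> 'g, \<sigma>)" for \<sigma>
    by (simp add: perm_embed_def)
  ultimately show ?thesis
    unfolding Pset_def by fastforce
qed

lemma card_wreath_quotient:
  assumes "H \<lhd> sym_group n"
  shows "card (carrier ((wreath n :: ((nat \<Rightarrow> 'g::ab_group_add) \<times> (nat \<Rightarrow> nat)) monoid) Mod wreath_sub n H))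
    = card (carrier (sym_group n)) div card H"
proof -
  let ?W = "wreath n :: ((nat \<Rightarrow> 'g) \<times> (nat \<Rightarrow> nat)) monoid"
  have H: "subgroup H (sym_group n)"
    using assms by (rule normal_imp_subgroup)
  have "card (carrier (?W Mod wreath_sub n H)) = card (rcosets\<^bsub>sym_group n\<^esub> H)"
  proof -
    have "wreath_sub n H = {x \<in> carrier ?W. snd x \<in> H}"
      using subgroup.subset[OF H] by (rule wreath_sub_eq_vimage)
    then have "carrier (?W Mod wreath_sub n H) = rcosets\<^bsub>?W\<^esub> {x \<in> carrier ?W. snd x \<in> H}"
      by (simp add: FactGroup_def)
    then show ?thesis
      using bij_betw_same_card[OF group_hom.bij_betw_rcosets_vimage[OF group_hom_snd_wreath H snd_image_wreath]]
      by simp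
  qed
  moreover have "card (rcosets\<^bsub>sym_group n\<^esub> H) * card H = card (carrier (sym_group n))"
    using group.lagrange[OF sym_group_is_group H] by (simp add: order_def)
  moreover have "finite (carrier (sym_group n))"
    using finite_permutations_atLeastAtMost[of n] by (simp add: sym_group_def)
  then have "card H \<noteq> 0"
    using subgroup.one_closed[OF H] finite_subset[OF subgroup.subset[OF H]] by auto
  ultimately show ?thesis
    by (metis nonzero_mult_div_cancel_right)
qed

lemma finite_wreath_quotient:
  assumes "finite (UNIV :: 'g::ab_group_add set)"
  shows "finite (carrier ((wreath n :: ((nat \<Rightarrow> 'g) \<times> (nat \<Rightarrow> nat)) monoid) Mod K))"
  using assms finite_permutations_atLeastAtMost
  by (simp add: carrier_FactGroup wreath_carrier finite_PiE)

theorem mainTheorem17: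
  fixes n :: nat and H :: "(nat \<Rightarrow> nat) set"
  assumes "finite (UNIV :: 'g::{ab_group_add} set)"
    and "n > 0"
    and "H \<lhd> sym_group n"
  shows "\<exists>P :: ((nat \<Rightarrow> 'g) \<times> (nat \<Rightarrow> nat)) set \<times> ((nat \<Rightarrow> 'g) \<times> (nat \<Rightarrow> nat)) set
                 \<Rightarrow> (nat \<times> nat, 'g) mpol.
           Ghat_rep (carrier (wreath n Mod wreath_sub n H)) {1..n} P
         \<and> card (carrier (wreath n Mod wreath_sub n H)) = card (carrier (sym_group n)) div card H
         \<and> (\<forall>a\<in>carrier (wreath n). \<forall>b\<in>carrier (wreath n).
              P (wreath_sub n H #>\<^bsub>wreath n\<^esub> a, wreath_sub n H #>\<^bsub>wreath n\<^esub> b)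
              - (\<Sum>\<sigma>\<in>Pset n (wreath_sub n H #>\<^bsub>wreath n\<^esub> (a \<otimes>\<^bsub>wreath n\<^esub> inv\<^bsub>wreath n\<^esub> b)). xperm n \<sigma>)
              \<in> Mideal {1..n})"
proof -
  let ?W = "wreath n :: ((nat \<Rightarrow> 'g) \<times> (nat \<Rightarrow> nat)) monoid" and ?K = "wreath_sub n H"
  interpret normal ?K ?W
    using assms(3) by (rule normal_wreath_sub)
  interpret perm_action n "carrier (?W Mod ?K)" "\<lambda>\<sigma> C. perm_embed n \<sigma> <#\<^bsub>?W\<^esub> C"
    using assms(3) by (rule perm_action_wreath_cosets)
  have Pset: "Pset n (?K #>\<^bsub>?W\<^esub> (a \<otimes>\<^bsub>?W\<^esub> inv\<^bsub>?W\<^esub> b)) = transporter (?K #>\<^bsub>?W\<^esub> a) (?K #>\<^bsub>?W\<^esub> b)"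
    if "a \<in> carrier ?W" "b \<in> carrier ?W" for a b
    using that assms(3)
    by (simp add: Pset_r_coset_wreath transporter_def mem_r_coset_mult_inv_iff perm_embed_in_carrier
        cong: conj_cong)
  show ?thesis
    using Ghat_rep_rep_poly[OF finite_wreath_quotient[OF assms(1)]] card_wreath_quotient[OF assms(3)] Pset
    by (intro exI[of _ rep_poly] conjI ballI) (simp_all add: rep_poly_def)
qed

end
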